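(* Let $g$, $r_c$ and the global frame $\vec E$ be as in the context. Let $(s,\vec r)$ be a molecule with $N$ atoms and pairwise distinct positions. If there exist $\vec t\in\mathbb{R}^{1\times3}$ and $o\in\mathrm{O}(3)$ with $o\neq I$ such that $$\{(s_i,\vec r_i-\vec t): i=1,\dots,N\}=\{(s_i,(\vec r_i-\vec t)o^T): i=1,\dots,N\},$$ then $\mathrm{rank}(\vec E(s,\vec r))<3$.
   Context: $s\in\mathbb{R}^{N\times d}$ and $\vec r\in\mathbb{R}^{N\times3}$ have rows $s_i$ and $\vec r_i\in\mathbb{R}^{1\times 3}$. $\mathrm{O}(3)=\{Q\in\mathbb{R}^{3\times3}:QQ^T=I\}$. A local environment is a finite set of pairs $(s',x)$ with $s'\in\mathbb{R}^d$, $x\in\mathbb{R}^{1\times 3}$. $g$ is a function from local environments to $\mathbb{R}^{F\times 3}$ with $g(\{(s',xo^T):(s',x)\in A\})=g(A)o^T$ for all $o\in\mathrm{O}(3)$ and all $A$. With cutoff $r_c>0$, the local frames are $\vec E_i(s,\vec r)=g(\{(s_j,\vec r_i-\vec r_j): \|\vec r_i-\vec r_j\|<r_c\})$ and the global frame is $\vec E(s,\vec r)=\sum_{i=1}^N\vec E_i(s,\vec r)$. *)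

theory Defs
  imports "HOL-Analysis.Analysis"
begin

text \<open>Atoms are indexed by 0..N-1; s i is the feature row s_i in R^d (type real^'d),
 r i is the position row r_i in R^{1x3} (type real^3). A frame value in R^{F x 3}
 is a matrix of type real^3^'f (F rows, 3 columns). For a row vector x and a
 3x3 matrix o, the row vector x o^T is (Q *v x); for a matrix E, E o^T is E ** transpose o.\<close>

definition local_env :: "real \<Rightarrow> nat \<Rightarrow> (nat \<Rightarrow> real^'d) \<Rightarrow> (nat \<Rightarrow> real^3) \<Rightarrow> nat
    \<Rightarrow> ((real^'d) \<times> (real^3)) set" where
  "local_env rc N s r i = {(s j, r i - r j) | j. j < N \<and> norm (r i - r j) < rc}"

definition local_frame ::
  "(((real^'d) \<times> (real^3)) set \<Rightarrow> real^3^'f) \<Rightarrow> real \<Rightarrow> nat \<Rightarrow> (nat \<Rightarrow> real^'d)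
     \<Rightarrow> (nat \<Rightarrow> real^3) \<Rightarrow> nat \<Rightarrow> real^3^'f" where
  "local_frame g rc N s r i = g (local_env rc N s r i)"

definition global_frame ::
  "(((real^'d) \<times> (real^3)) set \<Rightarrow> real^3^'f) \<Rightarrow> real \<Rightarrow> nat \<Rightarrow> (nat \<Rightarrow> real^'d)
     \<Rightarrow> (nat \<Rightarrow> real^3) \<Rightarrow> real^3^'f" where
  "global_frame g rc N s r = (\<Sum>i<N. local_frame g rc N s r i)"

definition O3_equivariant :: "(((real^'d) \<times> (real^3)) set \<Rightarrow> real^3^'f) \<Rightarrow> bool" where
  "O3_equivariant g \<longleftrightarrow>
     (\<forall>Q A. orthogonal_matrix (Q :: real^3^3) \<and> finite A \<longrightarrow>
        g ((\<lambda>(s', x). (s', Q *v x)) ` A) = g A ** transpose Q)"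

end

theory Submission
  imports Defs
begin

text \<open>A nontrivial symmetry \<open>x \<mapsto> t + Q (x - t)\<close> of the labelled point cloud permutes the
  atoms, and this permutation maps each local environment onto the \<open>Q\<close>-rotated environment
  of its preimage. By equivariance of \<open>g\<close> the global frame \<open>E\<close> therefore satisfies
  \<open>E Q\<^sup>T = E\<close>. As \<open>Q \<noteq> I\<close>, some \<open>Q\<^sup>T x - x\<close> is nonzero, and \<open>E\<close> annihilates it, so
  \<open>E\<close> cannot have full rank.\<close>

lemma sum_matrix_mult_right:
  fixes B :: "'a::semiring_1^'p^'n" and F :: "'i \<Rightarrow> 'a^'n^'m"
  shows "(\<Sum>i\<in>I. F i ** B) = (\<Sum>i\<in>I. F i) ** B"
  by (induction I rule: infinite_finite_induct)
     (simp_all add: matrix_matrix_mult_def vec_eq_iff sum.distrib distrib_right)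

lemma rank_less_card_if_mult_right_fixed:
  fixes E :: "real^'n^'m" and A :: "real^'n^'n"
  assumes "E ** A = E" and "A \<noteq> mat 1"
  shows "rank E < CARD('n)"
proof -
  obtain x where x: "A *v x \<noteq> x"
    using assms(2) matrix_eq[of A "mat 1"] by auto
  have "E *v (A *v x - x) = 0"
    using assms(1) by (simp add: matrix_vector_mult_diff_distrib matrix_vector_mul_assoc)
  then have "\<not> inj ((*v) E)"
    using x by (metis inj_eq matrix_vector_mult_0_right right_minus_eq)
  then show ?thesis
    by (simp add: less_rank_noninjective)
qed

lemma symmetric_labelled_points_permutation:
  fixes N :: nat
  assumes "inj_on r {..<N}" and "inj f"
    and sym: "{(s i, r i) | i. i < N} = {(s i, f (r i)) | i. i < N}"
  obtains \<sigma> where "bij_betw \<sigma> {..<N} {..<N}"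
    and "\<And>i. i < N \<Longrightarrow> s (\<sigma> i) = s i \<and> r (\<sigma> i) = f (r i)"
proof -
  have "\<forall>i\<in>{..<N}. \<exists>j. j < N \<and> s j = s i \<and> r j = f (r i)"
  proof
    fix i assume "i \<in> {..<N}"
    then have "(s i, f (r i)) \<in> {(s i, f (r i)) | i. i < N}"
      by blast
    then have "(s i, f (r i)) \<in> {(s i, r i) | i. i < N}"
      by (simp only: sym)
    then obtain j where "j < N" and "(s i, f (r i)) = (s j, r j)"
      by blast
    then show "\<exists>j. j < N \<and> s j = s i \<and> r j = f (r i)"
      by auto
  qed
  then obtain \<sigma> where \<sigma>: "\<forall>i\<in>{..<N}. \<sigma> i < N \<and> s (\<sigma> i) = s i \<and> r (\<sigma> i) = f (r i)"
    by (rule bchoice[THEN exE])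
  have "inj_on \<sigma> {..<N}"
  proof (rule inj_onI)
    fix i k assume i: "i \<in> {..<N}" and k: "k \<in> {..<N}" and "\<sigma> i = \<sigma> k"
    then have "f (r i) = f (r k)"
      using \<sigma> by metis
    then have "r i = r k"
      by (rule injD[OF assms(2)])
    then show "i = k"
      using i k by (rule inj_onD[OF assms(1)])
  qed
  moreover have "\<sigma> ` {..<N} \<subseteq> {..<N}"
    using \<sigma> by auto
  ultimately have "\<sigma> ` {..<N} = {..<N}"
    by (simp add: endo_inj_surj)
  then show ?thesis
    using that \<sigma> \<open>inj_on \<sigma> {..<N}\<close> unfolding bij_betw_def by simp
qed

lemma finite_local_env: "finite (local_env rc N s r i)"
proof -
  have "local_env rc N s r i \<subseteq> (\<lambda>j. (s j, r i - r j)) ` {..<N}"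
    unfolding local_env_def by auto
  then show ?thesis
    by (rule finite_subset) auto
qed

lemma local_env_relabel:
  assumes \<sigma>: "bij_betw \<sigma> {..<N} {..<N}"
    and s: "\<And>i. i < N \<Longrightarrow> s (\<sigma> i) = s i"
    and r: "\<And>i k. i < N \<Longrightarrow> k < N \<Longrightarrow> r (\<sigma> i) - r (\<sigma> k) = f (r i - r k)"
    and f: "\<And>x. norm (f x) = norm x"
    and i: "i < N"
  shows "local_env rc N s r (\<sigma> i) = (\<lambda>(s', x). (s', f x)) ` local_env rc N s r i"
proof (intro set_eqI iffI)
  fix p assume "p \<in> local_env rc N s r (\<sigma> i)"
  then obtain j where j: "j < N" "norm (r (\<sigma> i) - r j) < rc" "p = (s j, r (\<sigma> i) - r j)"
    unfolding local_env_def by blast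
  moreover have "\<sigma> ` {..<N} = {..<N}"
    using \<sigma> by (rule bij_betw_imp_surj_on)
  ultimately obtain k where k: "k < N" "j = \<sigma> k"
    by (metis imageE lessThan_iff)
  have "norm (r i - r k) < rc"
    using j(2) by (simp add: k(2) r[OF i k(1)] f)
  then have "(s k, r i - r k) \<in> local_env rc N s r i"
    using k(1) unfolding local_env_def by blast
  moreover have "p = (s k, f (r i - r k))"
    using j(3) by (simp add: k(2) s[OF k(1)] r[OF i k(1)])
  ultimately show "p \<in> (\<lambda>(s', x). (s', f x)) ` local_env rc N s r i"
    by (simp add: rev_image_eqI)
next
  fix p assume "p \<in> (\<lambda>(s', x). (s', f x)) ` local_env rc N s r i"
  then obtain q where q: "q \<in> local_env rc N s r i" "p = (fst q, f (snd q))"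
    by (auto simp: case_prod_beta)
  then obtain k where k: "k < N" "norm (r i - r k) < rc" "p = (s k, f (r i - r k))"
    unfolding local_env_def by auto
  have "\<sigma> k < N"
    using bij_betw_apply[OF \<sigma>] k(1) by blast
  moreover have "norm (r (\<sigma> i) - r (\<sigma> k)) < rc"
    using k(2) by (simp add: r[OF i k(1)] f)
  moreover have "p = (s (\<sigma> k), r (\<sigma> i) - r (\<sigma> k))"
    using k(3) by (simp add: s[OF k(1)] r[OF i k(1)])
  ultimately show "p \<in> local_env rc N s r (\<sigma> i)"
    unfolding local_env_def by blast
qed

lemma orthogonal_matrix_transformation:
  fixes Q :: "real^'n^'n"
  assumes "orthogonal_matrix Q"
  shows "orthogonal_transformation ((*v) Q)"
  using assms orthogonal_transformation_matrix[of "(*v) Q"] by (simp add: matrix_vector_mul_linear)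

lemma global_frame_mult_transpose_symmetry:
  assumes g: "O3_equivariant g" and Q: "orthogonal_matrix Q"
    and \<sigma>: "bij_betw \<sigma> {..<N} {..<N}"
    and s: "\<And>i. i < N \<Longrightarrow> s (\<sigma> i) = s i"
    and r: "\<And>i k. i < N \<Longrightarrow> k < N \<Longrightarrow> r (\<sigma> i) - r (\<sigma> k) = Q *v (r i - r k)"
  shows "global_frame g rc N s r ** transpose Q = global_frame g rc N s r"
proof -
  have env: "local_env rc N s r (\<sigma> i) = (\<lambda>(s', x). (s', Q *v x)) ` local_env rc N s r i"
    if "i < N" for i
    using local_env_relabel[where \<sigma>=\<sigma> and s=s and r=r and f="(*v) Q", OF \<sigma> s r
        orthogonal_transformation_norm[OF orthogonal_matrix_transformation[OF Q]] that] .
  have "local_frame g rc N s r (\<sigma> i) = local_frame g rc N s r i ** transpose Q"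
    if "i < N" for i
    using g Q finite_local_env unfolding local_frame_def env[OF that] O3_equivariant_def by blast
  then have "global_frame g rc N s r ** transpose Q = (\<Sum>i<N. local_frame g rc N s r (\<sigma> i))"
    unfolding global_frame_def sum_matrix_mult_right[symmetric] by simp
  also have "\<dots> = global_frame g rc N s r"
    unfolding global_frame_def by (rule sum.reindex_bij_betw[OF \<sigma>])
  finally show ?thesis .
qed

theorem proposition10:
  fixes g :: "((real^'d) \<times> (real^3)) set \<Rightarrow> real^3^'f"
    and rc :: real and N :: nat
    and s :: "nat \<Rightarrow> real^'d" and r :: "nat \<Rightarrow> real^3"
    and t :: "real^3" and Q :: "real^3^3"
  assumes "O3_equivariant g"
    and "rc > 0"
    and "inj_on r {..<N}"
    and "orthogonal_matrix Q" and "Q \<noteq> mat 1"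
    and "{(s i, r i - t) | i. i < N} = {(s i, Q *v (r i - t)) | i. i < N}"
  shows "rank (global_frame g rc N s r) < 3"
proof -
  have "inj_on (\<lambda>i. r i - t) {..<N}"
    using assms(3) by (auto simp: inj_on_def)
  moreover have "inj ((*v) Q)"
    using orthogonal_transformation_inj orthogonal_matrix_transformation[OF assms(4)] by blast
  ultimately obtain \<sigma> where \<sigma>: "bij_betw \<sigma> {..<N} {..<N}"
    and s\<sigma>: "\<And>i. i < N \<Longrightarrow> s (\<sigma> i) = s i \<and> r (\<sigma> i) - t = Q *v (r i - t)"
    using symmetric_labelled_points_permutation[OF _ _ assms(6)] by blast
  have "r (\<sigma> i) - r (\<sigma> k) = Q *v (r i - r k)" if "i < N" "k < N" for i k
  proof -
    have "r (\<sigma> i) - r (\<sigma> k) = (r (\<sigma> i) - t) - (r (\<sigma> k) - t)" by simp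
    also have "\<dots> = Q *v (r i - t) - Q *v (r k - t)" using s\<sigma> that by simp
    also have "\<dots> = Q *v (r i - r k)" by (simp add: matrix_vector_mult_diff_distrib)
    finally show ?thesis .
  qed
  then have "global_frame g rc N s r ** transpose Q = global_frame g rc N s r"
    using global_frame_mult_transpose_symmetry[OF assms(1,4) \<sigma>] s\<sigma> by blast
  moreover have "transpose Q \<noteq> mat 1"
    using assms(5) by (metis transpose_mat transpose_transpose)
  ultimately show ?thesis
    using rank_less_card_if_mult_right_fixed[of _ "transpose Q"] by simp
qed

end
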